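(* Let $n\ge 2k\ge 1$, and let $w$ be a weighted $k$-uniform hypergraph on a vertex set $V$ with $|V|=n$, with $W$-vector $(W_0,\ldots,W_k)$. Fix a sequence $x_1,y_1,\ldots,x_k,y_k$ of $2k$ distinct vertices of $V$, and for $0\le i\le k$ define $\phi_i,\phi_i^*:V^{(k)}\to\mathbb{R}$ by $\phi_i(A)=(-1)^{|A\cap\{y_1,\ldots,y_i\}|}$ if $|A\cap\{x_j,y_j\}|=1$ for all $j=1,\ldots,i$, and $\phi_i(A)=0$ otherwise, and $\phi_i^*=\phi_i/\binom{n-2i}{k-i}$. Then for every $0\le i\le k$, $$W_i=\mathbb{E}_\pi|\langle w_\pi,\phi_i^*\rangle|,$$ where $\pi$ is a uniformly random permutation of $V$.
   Context: $V^{(k)}$ is the family of $k$-subsets of $V$; a weighted $k$-uniform hypergraph on $V$ is a function $w:V^{(k)}\to\mathbb{R}$; $w(S)=\sum_{e\in S^{(k)}}w(e)$; $\langle w,u\rangle=\sum_{e\in V^{(k)}}w(e)u(e)$; $w_\pi(e)=w(\pi^{-1}(e))$. In particular $\phi_0$ is the constant function $1$. $W$-vector (defined recursively on $k$): $W_0=|w(V)|/\binom nk$ (for $k=0$, $w$ is a single real number and $W_0=|w|$). For $k\ge1$ and distinct $x,y\in V$, $w^{xy}:(V\setminus\{x,y\})^{(k-1)}\to\mathbb{R}$ is $w^{xy}(e)=w(e\cup\{x\})-w(e\cup\{y\})$; with $(W^{xy}_0,\ldots,W^{xy}_{k-1})$ its $W$-vector, $W_i=\frac{1}{n(n-1)}\sum_{(x,y):\,x\ne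 y}W^{xy}_{i-1}$ for $1\le i\le k$ (average over ordered pairs of distinct vertices). *)

theory Defs
  imports Complex_Main "HOL-Combinatorics.Permutations"
begin

definition ksubsets :: "'a set \<Rightarrow> nat \<Rightarrow> 'a set set" where
  "ksubsets V k = {e. e \<subseteq> V \<and> card e = k}"

definition wtotal :: "nat \<Rightarrow> 'a set \<Rightarrow> ('a set \<Rightarrow> real) \<Rightarrow> real" where
  "wtotal k V w = (\<Sum>e\<in>ksubsets V k. w e)"

definition hinner :: "nat \<Rightarrow> 'a set \<Rightarrow> ('a set \<Rightarrow> real) \<Rightarrow> ('a set \<Rightarrow> real) \<Rightarrow> real" where
  "hinner k V w u = (\<Sum>e\<in>ksubsets V k. w e * u e)"

definition wxy :: "('a set \<Rightarrow> real) \<Rightarrow> 'a \<Rightarrow> 'a \<Rightarrow> 'a set \<Rightarrow> real" where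
  "wxy w x y = (\<lambda>e. w (e \<union> {x}) - w (e \<union> {y}))"

text \<open>Wvec k V w i is the i-th entry W_i of the W-vector of the weighted
  k-uniform hypergraph w on V (meaningful for i \<le> k).\<close>
fun Wvec :: "nat \<Rightarrow> 'a set \<Rightarrow> ('a set \<Rightarrow> real) \<Rightarrow> nat \<Rightarrow> real" where
  "Wvec k V w 0 = \<bar>wtotal k V w\<bar> / real (card V choose k)"
| "Wvec k V w (Suc i) =
     (if k = 0 then 0 else
       (\<Sum>p\<in>{(x, y). x \<in> V \<and> y \<in> V \<and> x \<noteq> y}.
           Wvec (k - 1) (V - {fst p, snd p}) (wxy w (fst p) (snd p)) i)
       / (real (card V) * (real (card V) - 1)))"

definition wperm :: "('a set \<Rightarrow> real) \<Rightarrow> ('a \<Rightarrow> 'a) \<Rightarrow> 'a set \<Rightarrow> real" where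
  "wperm w \<pi> = (\<lambda>e. w (inv \<pi> ` e))"

definition phi :: "(nat \<Rightarrow> 'a) \<Rightarrow> (nat \<Rightarrow> 'a) \<Rightarrow> nat \<Rightarrow> 'a set \<Rightarrow> real" where
  "phi x y i A = (if \<forall>j\<in>{1..i}. card (A \<inter> {x j, y j}) = 1
                  then (-1) ^ card (A \<inter> y ` {1..i}) else 0)"

definition phi_star :: "nat \<Rightarrow> nat \<Rightarrow> (nat \<Rightarrow> 'a) \<Rightarrow> (nat \<Rightarrow> 'a) \<Rightarrow> nat \<Rightarrow> 'a set \<Rightarrow> real" where
  "phi_star n k x y i A = phi x y i A / real ((n - 2 * i) choose (k - i))"

end

theory Submission
  imports Defs
begin

text \<open>For a sequence ps of disjoint ordered pairs (a_1,b_1), ..., (a_i,b_i), let phi be the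
  signed indicator of the k-sets meeting every pair in exactly one vertex, the sign being the
  parity of the number of b's hit. Then <w, phi> is the total weight of the iterated difference
  w^{a_1 b_1 ... a_i b_i} on V - {a_1, ..., b_i}: peeling off one pair splits the k-sets into
  those through a_1 and those through b_1. Unfolding the recursion, W_i is the average over all
  such sequences ps of W_0 of the iterated difference. Finally <w_pi, phi_i> = <w, phi> for the
  relabelled pairs (pi^-1 x_j, pi^-1 y_j), and as pi ranges over all permutations of V these
  relabelled sequences hit every sequence ps exactly (n - 2i)! times.\<close>

abbreviation offdiag :: "'a set \<Rightarrow> ('a \<times> 'a) set" where
  "offdiag V \<equiv> {(x, y). x \<in> V \<and> y \<in> V \<and> x \<noteq> y}"

text \<open>wxy_iter [(a_1,b_1), ..., (a_i,b_i)] w is w^{a_1 b_1 ... a_i b_i}, a function on the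
  (k-i)-subsets of V - {a_1, ..., b_i}.\<close>
fun wxy_iter :: "('a \<times> 'a) list \<Rightarrow> ('a set \<Rightarrow> real) \<Rightarrow> 'a set \<Rightarrow> real" where
  "wxy_iter [] u = u"
| "wxy_iter (p # ps) u = wxy_iter ps (wxy u (fst p) (snd p))"

definition verts :: "('a \<times> 'a) list \<Rightarrow> 'a list" where
  "verts ps = map fst ps @ map snd ps"

definition disjoint_pairs :: "'a set \<Rightarrow> ('a \<times> 'a) list \<Rightarrow> bool" where
  "disjoint_pairs V ps \<longleftrightarrow> distinct (verts ps) \<and> set (verts ps) \<subseteq> V"

definition pair_seqs :: "'a set \<Rightarrow> nat \<Rightarrow> ('a \<times> 'a) list set" where
  "pair_seqs V i = {ps. length ps = i \<and> disjoint_pairs V ps}"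

fun pair_seq_count :: "nat \<Rightarrow> nat \<Rightarrow> nat" where
  "pair_seq_count n 0 = 1"
| "pair_seq_count n (Suc i) = n * (n - 1) * pair_seq_count (n - 2) i"

definition phi_seq :: "('a \<times> 'a) list \<Rightarrow> 'a set \<Rightarrow> real" where
  "phi_seq ps A = (if \<forall>p\<in>set ps. card (A \<inter> {fst p, snd p}) = 1
                   then (-1) ^ card (A \<inter> snd ` set ps) else 0)"

definition xy_pairs :: "(nat \<Rightarrow> 'a) \<Rightarrow> (nat \<Rightarrow> 'a) \<Rightarrow> nat \<Rightarrow> ('a \<times> 'a) list" where
  "xy_pairs x y i = map (\<lambda>j. (x j, y j)) [1..<Suc i]"

lemma set_verts_Cons [simp]:
  "set (verts (p # ps)) = insert (fst p) (insert (snd p) (set (verts ps)))"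
  by (auto simp: verts_def)

lemma length_verts [simp]: "length (verts ps) = 2 * length ps"
  by (simp add: verts_def)

lemma disjoint_pairs_Cons:
  "disjoint_pairs V ((a, b) # ps) \<longleftrightarrow> (a, b) \<in> offdiag V \<and> disjoint_pairs (V - {a, b}) ps"
  unfolding disjoint_pairs_def verts_def by auto

lemma card_Diff_verts:
  assumes "finite V" "disjoint_pairs V ps"
  shows "card (V - set (verts ps)) = card V - 2 * length ps"
  using assms unfolding disjoint_pairs_def
  by (simp add: card_Diff_subset distinct_card)

lemma pair_seqs_0: "pair_seqs V 0 = {[]}"
  by (auto simp: pair_seqs_def disjoint_pairs_def verts_def)

lemma pair_seqs_Suc:
  "pair_seqs V (Suc i) = (\<Union>p\<in>offdiag V. Cons p ` pair_seqs (V - {fst p, snd p}) i)"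
proof (intro set_eqI iffI)
  fix ps assume "ps \<in> pair_seqs V (Suc i)"
  then obtain a b qs where "ps = (a, b) # qs" "length qs = i" "disjoint_pairs V ((a, b) # qs)"
    unfolding pair_seqs_def by (cases ps) auto
  then show "ps \<in> (\<Union>p\<in>offdiag V. Cons p ` pair_seqs (V - {fst p, snd p}) i)"
    unfolding pair_seqs_def disjoint_pairs_Cons by auto
qed (auto simp: pair_seqs_def disjoint_pairs_Cons)

lemma finite_pair_seqs: "finite V \<Longrightarrow> finite (pair_seqs V i)"
proof (rule finite_subset)
  show "pair_seqs V i \<subseteq> {ps. set ps \<subseteq> V \<times> V \<and> length ps = i}"
    unfolding pair_seqs_def disjoint_pairs_def verts_def by force
qed (simp add: finite_lists_length_eq)

lemma finite_offdiag: "finite V \<Longrightarrow> finite (offdiag V)"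
  by (rule finite_subset[of _ "V \<times> V"]) auto

lemma card_offdiag: "finite V \<Longrightarrow> card (offdiag V) = card V * (card V - 1)"
proof -
  assume "finite V"
  moreover have "offdiag V = V \<times> V - (\<lambda>x. (x, x)) ` V" by auto
  moreover have "card ((\<lambda>x. (x, x)) ` V) = card V" by (rule card_image) (auto simp: inj_on_def)
  ultimately show ?thesis
    by (simp add: card_Diff_subset card_cartesian_product diff_mult_distrib2 image_subset_iff)
qed

lemma sum_pair_seqs_Suc:
  assumes "finite V"
  shows "sum f (pair_seqs V (Suc i)) =
    (\<Sum>p\<in>offdiag V. \<Sum>ps\<in>pair_seqs (V - {fst p, snd p}) i. f (p # ps))"
proof -
  have "sum f (pair_seqs V (Suc i)) = (\<Sum>p\<in>offdiag V. sum f (Cons p ` pair_seqs (V - {fst p, snd p}) i))"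
    unfolding pair_seqs_Suc
    by (rule sum.UNION_disjoint) (auto simp: assms finite_offdiag finite_pair_seqs)
  also have "\<dots> = (\<Sum>p\<in>offdiag V. \<Sum>ps\<in>pair_seqs (V - {fst p, snd p}) i. f (p # ps))"
    by (intro sum.cong refl sum.reindex_cong[OF _ refl]) (auto simp: inj_on_def)
  finally show ?thesis .
qed

lemma card_pair_seqs: "finite V \<Longrightarrow> card (pair_seqs V i) = pair_seq_count (card V) i"
proof (induction i arbitrary: V)
  case 0
  then show ?case by (simp add: pair_seqs_0)
next
  case (Suc i)
  have "card (pair_seqs V (Suc i)) = (\<Sum>p\<in>offdiag V. card (pair_seqs (V - {fst p, snd p}) i))"
    using sum_pair_seqs_Suc[OF Suc.prems, of "\<lambda>_. 1::nat"] by simp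
  also have "\<dots> = (\<Sum>p\<in>offdiag V. pair_seq_count (card V - 2) i)"
    using Suc by (intro sum.cong) (auto simp: card_Diff_subset numeral_2_eq_2)
  finally show ?case
    using card_offdiag[OF Suc.prems] by simp
qed

lemma Wvec_eq_average:
  assumes "finite V" "i \<le> k"
  shows "Wvec k V w i =
    (\<Sum>ps\<in>pair_seqs V i. Wvec (k - i) (V - set (verts ps)) (wxy_iter ps w) 0)
      / card (pair_seqs V i)"
  using assms
proof (induction i arbitrary: k V w)
  case 0
  then show ?case by (simp add: pair_seqs_0 verts_def)
next
  case (Suc i)
  define c where "c = real (pair_seq_count (card V - 2) i)"
  let ?W0 = "\<lambda>ps. Wvec (k - Suc i) (V - set (verts ps)) (wxy_iter ps w) 0"
  have inner: "Wvec (k - 1) (V - {fst p, snd p}) (wxy w (fst p) (snd p)) i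
      = (\<Sum>ps\<in>pair_seqs (V - {fst p, snd p}) i. ?W0 (p # ps)) / c" if "p \<in> offdiag V" for p
  proof -
    have "card (V - {fst p, snd p}) = card V - 2"
      using that Suc.prems(1) by (auto simp: card_Diff_subset)
    moreover have "\<And>ps. V - {fst p, snd p} - set (verts ps) = V - set (verts (p # ps))"
      by auto
    ultimately show ?thesis
      using Suc.IH[of "V - {fst p, snd p}" "k - 1"] Suc.prems
      by (simp add: c_def card_pair_seqs)
  qed
  have card: "real (card (pair_seqs V (Suc i))) = c * (real (card V) * (real (card V) - 1))"
    by (cases "card V") (simp_all add: card_pair_seqs[OF Suc.prems(1)] c_def algebra_simps)
  have "Wvec k V w (Suc i) = (\<Sum>p\<in>offdiag V. \<Sum>ps\<in>pair_seqs (V - {fst p, snd p}) i. ?W0 (p # ps))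
      / (c * (real (card V) * (real (card V) - 1)))"
    using Suc.prems inner by (simp add: sum_divide_distrib[symmetric])
  also have "\<dots> = (\<Sum>ps\<in>pair_seqs V (Suc i). ?W0 ps) / card (pair_seqs V (Suc i))"
    unfolding card sum_pair_seqs_Suc[OF Suc.prems(1)] ..
  finally show ?case .
qed

lemma phi_seq_Cons:
  assumes "a \<noteq> b" "b \<notin> snd ` set ps"
  shows "phi_seq ((a, b) # ps) A = (if a \<in> A \<and> b \<notin> A then phi_seq ps A
     else if b \<in> A \<and> a \<notin> A then - phi_seq ps A else 0)"
proof -
  have "card (A \<inter> {a, b}) = 1 \<longleftrightarrow> (a \<in> A \<and> b \<notin> A) \<or> (b \<in> A \<and> a \<notin> A)"
    using assms(1) by (cases "a \<in> A"; cases "b \<in> A") auto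
  moreover have "card (A \<inter> snd ` set ((a, b) # ps)) =
      card (A \<inter> snd ` set ps) + (if b \<in> A then 1 else 0)"
    using assms(2) by (cases "b \<in> A") (auto simp: Int_insert_right)
  ultimately show ?thesis unfolding phi_seq_def by auto
qed

lemma phi_seq_insert:
  assumes "a \<notin> set (verts ps)"
  shows "phi_seq ps (insert a B) = phi_seq ps B"
proof -
  have "\<And>p. p \<in> set ps \<Longrightarrow> insert a B \<inter> {fst p, snd p} = B \<inter> {fst p, snd p}"
    and "insert a B \<inter> snd ` set ps = B \<inter> snd ` set ps"
    using assms unfolding verts_def by force+
  then show ?thesis unfolding phi_seq_def by simp
qed

lemma ksubsets_split:
  assumes "finite V" "a \<in> V" "b \<in> V" "a \<noteq> b" "k \<ge> 1"
  shows "{A \<in> ksubsets V k. a \<in> A \<and> b \<notin> A} = insert a ` ksubsets (V - {a, b}) (k - 1)"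
proof (intro set_eqI iffI)
  fix A assume A: "A \<in> {A \<in> ksubsets V k. a \<in> A \<and> b \<notin> A}"
  then have "finite A" using assms(1) unfolding ksubsets_def by (auto intro: finite_subset)
  then have "A - {a} \<in> ksubsets (V - {a, b}) (k - 1)" using A unfolding ksubsets_def by auto
  moreover have "A = insert a (A - {a})" using A by auto
  ultimately show "A \<in> insert a ` ksubsets (V - {a, b}) (k - 1)" by blast
next
  fix A assume "A \<in> insert a ` ksubsets (V - {a, b}) (k - 1)"
  then obtain B where B: "A = insert a B" "B \<subseteq> V - {a, b}" "card B = k - 1"
    unfolding ksubsets_def by auto
  moreover have "finite B" "a \<notin> B" using B assms(1) by (auto intro: finite_subset)
  ultimately show "A \<in> {A \<in> ksubsets V k. a \<in> A \<and> b \<notin> A}"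
    using B assms unfolding ksubsets_def by auto
qed

lemma sum_ksubsets_split:
  assumes "finite V" "a \<in> V" "b \<in> V" "a \<noteq> b" "k \<ge> 1"
    and "\<And>B. f (insert a B) = g B"
  shows "(\<Sum>A\<in>ksubsets V k. if a \<in> A \<and> b \<notin> A then f A else 0) =
    (\<Sum>B\<in>ksubsets (V - {a, b}) (k - 1). g B)"
proof -
  have "finite (ksubsets V k)"
    by (rule finite_subset[of _ "Pow V"]) (auto simp: ksubsets_def assms(1))
  then have "(\<Sum>A\<in>ksubsets V k. if a \<in> A \<and> b \<notin> A then f A else 0) =
      (\<Sum>A\<in>{A \<in> ksubsets V k. a \<in> A \<and> b \<notin> A}. f A)"
    by (simp add: sum.inter_filter)
  also have "\<dots> = (\<Sum>A\<in>insert a ` ksubsets (V - {a, b}) (k - 1). f A)"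
    by (simp only: ksubsets_split[OF assms(1-5)])
  also have "\<dots> = (\<Sum>B\<in>ksubsets (V - {a, b}) (k - 1). f (insert a B))"
    by (rule sum.reindex[unfolded comp_def]) (auto simp: inj_on_def ksubsets_def)
  also have "\<dots> = (\<Sum>B\<in>ksubsets (V - {a, b}) (k - 1). g B)"
    by (simp only: assms(6))
  finally show ?thesis .
qed

lemma hinner_phi_seq_Cons:
  assumes "finite V" "disjoint_pairs V ((a, b) # ps)" "k \<ge> 1"
  shows "hinner k V u (phi_seq ((a, b) # ps)) = hinner (k - 1) (V - {a, b}) (wxy u a b) (phi_seq ps)"
proof -
  have ab: "(a, b) \<in> offdiag V" "a \<notin> set (verts ps)" "b \<notin> set (verts ps)"
    using assms(2) by (auto simp: disjoint_pairs_def verts_def)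
  have a_in: "(\<Sum>A\<in>ksubsets V k. if a \<in> A \<and> b \<notin> A then u A * phi_seq ps A else 0) =
      (\<Sum>B\<in>ksubsets (V - {a, b}) (k - 1). u (B \<union> {a}) * phi_seq ps B)"
    using ab assms(1,3) by (intro sum_ksubsets_split) (auto simp: phi_seq_insert)
  have b_in: "(\<Sum>A\<in>ksubsets V k. if b \<in> A \<and> a \<notin> A then u A * phi_seq ps A else 0) =
      (\<Sum>B\<in>ksubsets (V - {b, a}) (k - 1). u (B \<union> {b}) * phi_seq ps B)"
    using ab assms(1,3) by (intro sum_ksubsets_split) (auto simp: phi_seq_insert)
  have "b \<notin> snd ` set ps" using ab by (auto simp: verts_def)
  then have "hinner k V u (phi_seq ((a, b) # ps)) =
    (\<Sum>A\<in>ksubsets V k. if a \<in> A \<and> b \<notin> A then u A * phi_seq ps A else 0) -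
    (\<Sum>A\<in>ksubsets V k. if b \<in> A \<and> a \<notin> A then u A * phi_seq ps A else 0)"
    using ab(1) unfolding hinner_def sum_subtractf[symmetric]
    by (intro sum.cong refl) (simp add: phi_seq_Cons)
  also have "\<dots> = hinner (k - 1) (V - {a, b}) (wxy u a b) (phi_seq ps)"
    unfolding a_in b_in insert_commute[of b a "{}"] hinner_def wxy_def sum_subtractf[symmetric]
    by (simp add: algebra_simps)
  finally show ?thesis .
qed

lemma hinner_phi_seq:
  assumes "finite V" "disjoint_pairs V ps" "length ps \<le> k"
  shows "hinner k V u (phi_seq ps) = wtotal (k - length ps) (V - set (verts ps)) (wxy_iter ps u)"
  using assms
proof (induction ps arbitrary: V k u)
  case Nil
  then show ?case by (simp add: hinner_def wtotal_def phi_seq_def verts_def)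
next
  case (Cons p ps)
  obtain a b where p: "p = (a, b)" by (cases p)
  have "disjoint_pairs (V - {a, b}) ps" using Cons.prems(2) by (simp add: p disjoint_pairs_Cons)
  moreover have "V - {a, b} - set (verts ps) = V - set (verts (p # ps))" by (auto simp: p)
  ultimately show ?case
    using Cons.IH[of "V - {a, b}" "k - 1"] Cons.prems by (simp add: p hinner_phi_seq_Cons)
qed

lemma hinner_wperm:
  assumes "\<pi> permutes V"
  shows "hinner k V (wperm w \<pi>) f = hinner k V w (\<lambda>B. f (\<pi> ` B))"
  unfolding hinner_def wperm_def
proof (rule sum.reindex_bij_witness[where i = "image \<pi>" and j = "image (inv \<pi>)"])
  fix A assume A: "A \<in> ksubsets V k"
  show "\<pi> ` inv \<pi> ` A = A"
    using assms by (simp add: image_comp permutes_inverses(1) o_def)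
  then show "w (inv \<pi> ` A) * f (\<pi> ` inv \<pi> ` A) = w (inv \<pi> ` A) * f A" by simp
  show "inv \<pi> ` A \<in> ksubsets V k"
    using A permutes_inv[OF assms] unfolding ksubsets_def
    by (auto simp: permutes_in_image intro!: card_image inj_on_subset[OF permutes_inj])
next
  fix B assume B: "B \<in> ksubsets V k"
  show "inv \<pi> ` \<pi> ` B = B"
    using assms by (simp add: image_comp permutes_inverses(2) o_def)
  show "\<pi> ` B \<in> ksubsets V k"
    using B assms unfolding ksubsets_def
    by (auto simp: permutes_in_image intro!: card_image inj_on_subset[OF permutes_inj])
qed

lemma card_image_Int:
  assumes "bij \<pi>"
  shows "card (\<pi> ` B \<inter> C) = card (B \<inter> inv \<pi> ` C)"
proof -
  have "\<pi> ` (B \<inter> inv \<pi> ` C) = \<pi> ` B \<inter> C"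
    using assms by (simp add: image_Int bij_is_inj image_image bij_is_surj surj_f_inv_f)
  then show ?thesis
    using bij_is_inj[OF assms] by (metis card_image inj_on_subset subset_UNIV)
qed

lemma phi_seq_image:
  assumes "bij \<pi>"
  shows "phi_seq ps (\<pi> ` B) = phi_seq (map (map_prod (inv \<pi>) (inv \<pi>)) ps) B"
proof -
  have "snd ` set (map (map_prod (inv \<pi>) (inv \<pi>)) ps) = inv \<pi> ` snd ` set ps"
    by (force simp: image_iff)
  then show ?thesis
    unfolding phi_seq_def using card_image_Int[OF assms] by simp
qed

lemma phi_eq_phi_seq: "phi x y i = phi_seq (xy_pairs x y i)"
proof -
  have "set (xy_pairs x y i) = (\<lambda>j. (x j, y j)) ` {1..i}"
    by (auto simp: xy_pairs_def)
  then show ?thesis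
    by (auto simp: fun_eq_iff phi_def phi_seq_def image_image)
qed

lemma disjoint_pairs_xy_pairs:
  assumes "\<forall>j\<in>{1..k}. x j \<in> V \<and> y j \<in> V"
    and "inj_on x {1..k}" and "inj_on y {1..k}"
    and "\<forall>j\<in>{1..k}. \<forall>l\<in>{1..k}. x j \<noteq> y l"
    and "i \<le> k"
  shows "disjoint_pairs V (xy_pairs x y i)"
proof -
  have sub: "{1..i} \<subseteq> {1..k}" using assms(5) by auto
  have "verts (xy_pairs x y i) = map x [1..<Suc i] @ map y [1..<Suc i]"
    by (simp add: verts_def xy_pairs_def comp_def)
  moreover have "set [1..<Suc i] = {1..i}" by auto
  ultimately show ?thesis
    unfolding disjoint_pairs_def using assms(1,4) sub
      inj_on_subset[OF assms(2) sub] inj_on_subset[OF assms(3) sub]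
    by (auto simp: distinct_map)
qed

lemma disjoint_pairs_map_inv:
  assumes "\<pi> permutes V" "disjoint_pairs V t"
  shows "disjoint_pairs V (map (map_prod (inv \<pi>) (inv \<pi>)) t)"
proof -
  have "verts (map (map_prod (inv \<pi>) (inv \<pi>)) t) = map (inv \<pi>) (verts t)"
    by (simp add: verts_def comp_def)
  moreover have "inj (inv \<pi>)" "inv \<pi> ` V = V"
    using permutes_inv[OF assms(1)] by (auto simp: permutes_inj permutes_image)
  ultimately show ?thesis
    using assms(2) unfolding disjoint_pairs_def by (auto simp: distinct_map inj_on_subset)
qed

lemma map_prod_map_eq_iff:
  assumes "length ps = length t"
  shows "map (map_prod f f) ps = t \<longleftrightarrow> map f (verts ps) = verts t"
proof -
  have "map (map_prod f f) ps = t \<longleftrightarrow>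
      map f (map fst ps) = map fst t \<and> map f (map snd ps) = map snd t"
    using assms by (induction ps t rule: list_induct2) (auto simp: prod_eq_iff)
  also have "\<dots> \<longleftrightarrow> map f (verts ps) = verts t"
    unfolding verts_def map_append using assms by (subst append_eq_append_conv) auto
  finally show ?thesis .
qed

lemma exists_permutes_map:
  assumes "length cs = length ds" "distinct cs" "distinct ds" "set cs \<subseteq> V" "set ds \<subseteq> V"
  shows "\<exists>\<sigma>. \<sigma> permutes V \<and> map \<sigma> cs = ds"
  using assms
proof (induction cs ds rule: list_induct2)
  case Nil
  show ?case using permutes_id by fastforce
next
  case (Cons c cs d ds)
  then obtain \<sigma> where \<sigma>: "\<sigma> permutes V" "map \<sigma> cs = ds" by auto
  let ?\<sigma> = "Transposition.transpose (\<sigma> c) d \<circ> \<sigma>"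
  have "\<sigma> c \<in> V" using \<sigma>(1) Cons.prems by (simp add: permutes_in_image)
  then have "?\<sigma> permutes V"
    using \<sigma>(1) Cons.prems by (intro permutes_compose permutes_swap_id) auto
  moreover have "map ?\<sigma> cs = ds"
  proof -
    have "?\<sigma> e = \<sigma> e" if "e \<in> set cs" for e
    proof -
      have "\<sigma> e \<noteq> \<sigma> c" using that Cons.prems permutes_inj[OF \<sigma>(1)] by (auto dest: injD)
      moreover have "\<sigma> e \<noteq> d" using that \<sigma>(2) Cons.prems by auto
      ultimately show ?thesis by (simp add: transpose_apply_other)
    qed
    then show ?thesis using \<sigma>(2) by (metis map_eq_conv)
  qed
  moreover have "?\<sigma> c = d" by simp
  ultimately show ?case by (metis list.map(2))
qed

lemma permutes_fixing_iff:
  assumes "C \<subseteq> V"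
  shows "\<tau> permutes V \<and> (\<forall>c\<in>C. \<tau> c = c) \<longleftrightarrow> \<tau> permutes (V - C)"
  using assms permutes_subset[of \<tau> "V - C" V] by (auto simp: permutes_def)

lemma card_permutes_map_eq:
  assumes "finite V" "length cs = length ds" "distinct cs" "distinct ds" "set cs \<subseteq> V" "set ds \<subseteq> V"
  shows "card {\<pi>. \<pi> permutes V \<and> map \<pi> cs = ds} = fact (card V - length cs)"
proof -
  obtain \<sigma> where \<sigma>: "\<sigma> permutes V" "map \<sigma> cs = ds"
    using exists_permutes_map[OF assms(2-6)] by blast
  have "{\<pi>. \<pi> permutes V \<and> map \<pi> cs = ds} = (\<lambda>\<tau>. \<sigma> \<circ> \<tau>) ` {\<tau>. \<tau> permutes (V - set cs)}"
  proof (intro set_eqI iffI)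
    fix \<pi> assume "\<pi> \<in> {\<pi>. \<pi> permutes V \<and> map \<pi> cs = ds}"
    then have \<pi>: "\<pi> permutes V" "map \<pi> cs = map \<sigma> cs" using \<sigma>(2) by auto
    have "inv \<sigma> \<circ> \<pi> permutes V" using \<pi>(1) \<sigma>(1) by (intro permutes_compose permutes_inv)
    moreover have "\<forall>c\<in>set cs. (inv \<sigma> \<circ> \<pi>) c = c"
      using \<pi>(2) permutes_inverses(2)[OF \<sigma>(1)] by (auto simp: map_eq_conv)
    moreover have "\<pi> = \<sigma> \<circ> (inv \<sigma> \<circ> \<pi>)"
      using \<sigma>(1) by (simp add: fun_eq_iff permutes_inverses(1))
    ultimately show "\<pi> \<in> (\<lambda>\<tau>. \<sigma> \<circ> \<tau>) ` {\<tau>. \<tau> permutes (V - set cs)}"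
      using permutes_fixing_iff[OF assms(5)] by blast
  next
    fix \<pi> assume "\<pi> \<in> (\<lambda>\<tau>. \<sigma> \<circ> \<tau>) ` {\<tau>. \<tau> permutes (V - set cs)}"
    then obtain \<tau> where "\<pi> = \<sigma> \<circ> \<tau>" "\<tau> permutes V" "\<forall>c\<in>set cs. \<tau> c = c"
      using permutes_fixing_iff[OF assms(5)] by blast
    then show "\<pi> \<in> {\<pi>. \<pi> permutes V \<and> map \<pi> cs = ds}"
      using \<sigma> by (auto intro: permutes_compose simp: map_eq_conv)
  qed
  moreover have "inj (\<lambda>\<tau>. \<sigma> \<circ> \<tau>)"
    using permutes_inj[OF \<sigma>(1)] by (auto simp: inj_def fun_eq_iff dest: injD)
  ultimately have "card {\<pi>. \<pi> permutes V \<and> map \<pi> cs = ds} = card {\<tau>. \<tau> permutes (V - set cs)}"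
    by (metis card_image inj_on_subset subset_UNIV)
  also have "\<dots> = fact (card V - length cs)"
    using assms by (simp add: card_permutations card_Diff_subset distinct_card)
  finally show ?thesis .
qed

lemma sum_permutes_relabel:
  fixes f :: "('a \<times> 'a) list \<Rightarrow> real"
  assumes "finite V" "disjoint_pairs V t"
  shows "(\<Sum>\<pi> | \<pi> permutes V. f (map (map_prod (inv \<pi>) (inv \<pi>)) t)) =
    fact (card V - 2 * length t) * (\<Sum>ps\<in>pair_seqs V (length t). f ps)"
proof -
  let ?P = "{\<pi>. \<pi> permutes V}" and ?S = "pair_seqs V (length t)"
  let ?r = "\<lambda>\<pi>. map (map_prod (inv \<pi>) (inv \<pi>)) t"
  have fibre: "card {\<pi> \<in> ?P. ?r \<pi> = ps} = fact (card V - 2 * length t)" if "ps \<in> ?S" for ps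
  proof -
    have "{\<pi> \<in> ?P. ?r \<pi> = ps} = {\<pi>. \<pi> permutes V \<and> map \<pi> (verts ps) = verts t}"
    proof -
      have "?r \<pi> = ps \<longleftrightarrow> map (map_prod \<pi> \<pi>) ps = t" if "\<pi> permutes V" for \<pi>
        using permutes_inverses[OF that] by (auto simp: comp_def map_prod_def split_def)
      then show ?thesis
        using that map_prod_map_eq_iff[of ps t] by (auto simp: pair_seqs_def)
    qed
    then show ?thesis
      using that assms by (simp add: card_permutes_map_eq pair_seqs_def disjoint_pairs_def)
  qed
  have "(\<Sum>\<pi>\<in>?P. f (?r \<pi>)) = (\<Sum>ps\<in>?S. \<Sum>\<pi>\<in>{\<pi> \<in> ?P. ?r \<pi> = ps}. f (?r \<pi>))"
    using assms disjoint_pairs_map_inv[of _ V t]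
    by (intro sum.group[symmetric] finite_pair_seqs) (auto simp: finite_permutations pair_seqs_def)
  also have "\<dots> = (\<Sum>ps\<in>?S. fact (card V - 2 * length t) * f ps)"
    using fibre by (intro sum.cong refl) simp
  finally show ?thesis by (simp add: sum_distrib_left)
qed

lemma fact_eq_card_pair_seqs:
  assumes "finite V" "disjoint_pairs V t"
  shows "fact (card V) = fact (card V - 2 * length t) * real (card (pair_seqs V (length t)))"
  using sum_permutes_relabel[OF assms, of "\<lambda>_. 1"] assms(1) by (simp add: card_permutations)

lemma abs_hinner_wperm_phi_star:
  assumes "finite V" "\<pi> permutes V" "disjoint_pairs V (xy_pairs x y i)" "i \<le> k"
  defines "ps \<equiv> map (map_prod (inv \<pi>) (inv \<pi>)) (xy_pairs x y i)"
  shows "\<bar>hinner k V (wperm w \<pi>) (phi_star (card V) k x y i)\<bar> =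
    Wvec (k - i) (V - set (verts ps)) (wxy_iter ps w) 0"
proof -
  have ps: "disjoint_pairs V ps" "length ps = i"
    using disjoint_pairs_map_inv[OF assms(2,3)] by (simp_all add: ps_def xy_pairs_def)
  have "hinner k V (wperm w \<pi>) (phi_star (card V) k x y i) =
      hinner k V (wperm w \<pi>) (phi x y i) / real ((card V - 2 * i) choose (k - i))"
    by (simp add: hinner_def phi_star_def sum_divide_distrib)
  also have "hinner k V (wperm w \<pi>) (phi x y i) = hinner k V w (phi_seq ps)"
    using hinner_wperm[OF assms(2)] phi_seq_image[OF permutes_bij[OF assms(2)]]
    by (simp add: phi_eq_phi_seq ps_def)
  also have "\<dots> = wtotal (k - i) (V - set (verts ps)) (wxy_iter ps w)"
    using hinner_phi_seq[OF assms(1) ps(1)] ps(2) assms(4) by simp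
  finally show ?thesis
    using card_Diff_verts[OF assms(1) ps(1)] ps(2) by simp
qed

theorem lemma3p1:
  fixes V :: "'a set" and n k :: nat and w :: "'a set \<Rightarrow> real"
    and x y :: "nat \<Rightarrow> 'a"
  assumes "finite V" and "card V = n"
    and "1 \<le> 2 * k" and "2 * k \<le> n"
    and "\<forall>j\<in>{1..k}. x j \<in> V \<and> y j \<in> V"
    and "inj_on x {1..k}" and "inj_on y {1..k}"
    and "\<forall>j\<in>{1..k}. \<forall>l\<in>{1..k}. x j \<noteq> y l"
    and "i \<le> k"
  shows "Wvec k V w i =
    (\<Sum>\<pi>\<in>{\<pi>. \<pi> permutes V}. \<bar>hinner k V (wperm w \<pi>) (phi_star n k x y i)\<bar>) / fact n"
proof -
  define t where "t = xy_pairs x y i"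
  define W0 where "W0 ps = Wvec (k - i) (V - set (verts ps)) (wxy_iter ps w) 0" for ps
  have t: "disjoint_pairs V t" "length t = i"
    using disjoint_pairs_xy_pairs[OF assms(5-9)] by (simp_all add: t_def xy_pairs_def)
  have count: "fact n = fact (n - 2 * i) * real (card (pair_seqs V i))"
    using fact_eq_card_pair_seqs[OF assms(1) t(1)] t(2) assms(2) by simp
  then have "card (pair_seqs V i) \<noteq> 0" by (metis fact_nonzero mult_zero_right of_nat_0)
  have "(\<Sum>\<pi>\<in>{\<pi>. \<pi> permutes V}. \<bar>hinner k V (wperm w \<pi>) (phi_star n k x y i)\<bar>) =
      (\<Sum>\<pi>\<in>{\<pi>. \<pi> permutes V}. W0 (map (map_prod (inv \<pi>) (inv \<pi>)) t))"
    using abs_hinner_wperm_phi_star[OF assms(1) _ t(1)[unfolded t_def] assms(9)] assms(2)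
    by (intro sum.cong) (auto simp: W0_def t_def)
  also have "\<dots> = fact (n - 2 * i) * (\<Sum>ps\<in>pair_seqs V i. W0 ps)"
    using sum_permutes_relabel[OF assms(1) t(1)] t(2) assms(2) by simp
  also have "\<dots> = fact n * Wvec k V w i"
    using count \<open>card (pair_seqs V i) \<noteq> 0\<close> Wvec_eq_average[OF assms(1,9)]
    by (simp add: W0_def)
  finally show ?thesis by simp
qed

end
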